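(* Let $s\ge 1$ and let $a_1,\dots,a_k$ be pairwise coprime positive integers and $d_1,\dots,d_k$ positive integers with $k\le s$ and $a_i,d_i\le 2^s$, such that the minimal polynomial over $\mathbb{Q}$ of the positive real number $\sqrt[d_i]{a_i}$ is $x^{d_i}-a_i$ for each $i$. Let $d=\operatorname{lcm}(d_1,\dots,d_k)$, $\zeta_d=e^{2\pi i/d}$, $K=\mathbb{Q}(\sqrt[d_1]{a_1},\dots,\sqrt[d_k]{a_k},\zeta_d)$. Then there exist integers $c_0,c_1,\dots,c_k$ with $|c_i|\le 2^{4s^2}$ such that $$\theta=c_0\zeta_d+\sum_{i=1}^k c_i\sqrt[d_i]{a_i}$$ is a primitive element of $K$, i.e. $K=\mathbb{Q}(\theta)$, and $\deg\theta\le 2^{2s^2}$.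
   Context: $\deg\theta$ is the degree of the minimal polynomial of $\theta$ over $\mathbb{Q}$. *)

theory Defs
  imports Complex_Main "HOL-Computational_Algebra.Polynomial" "HOL-Computational_Algebra.Polynomial_Factorial"
begin

definition is_subfield :: "complex set \<Rightarrow> bool" where
  "is_subfield F \<longleftrightarrow> 0 \<in> F \<and> 1 \<in> F \<and>
     (\<forall>x\<in>F. \<forall>y\<in>F. x + y \<in> F \<and> x * y \<in> F) \<and>
     (\<forall>x\<in>F. - x \<in> F \<and> inverse x \<in> F)"

definition field_gen :: "complex set \<Rightarrow> complex set" where
  "field_gen S = \<Inter>{F. is_subfield F \<and> S \<subseteq> F}"

definition is_min_poly :: "rat poly \<Rightarrow> complex \<Rightarrow> bool" where
  "is_min_poly p x \<longleftrightarrow> p \<noteq> 0 \<and> lead_coeff p = 1 \<and> poly (map_poly of_rat p) x = 0 \<and>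
     (\<forall>q. q \<noteq> 0 \<and> poly (map_poly of_rat q) x = 0 \<longrightarrow> degree p \<le> degree q)"

end

theory Submission
  imports Defs "HOL-Computational_Algebra.Fundamental_Theorem_Algebra" "HOL-Library.FuncSet"
begin

(* Every element of K = Q(zeta, alpha_1, ..., alpha_k) is a rational combination of the
   D * d_1 * ... * d_k monomials zeta^j * alpha_1^e_1 * ... * alpha_k^e_k with j < D and e_i < d_i,
   and so are all its powers; hence every element of K has degree at most 2^(2 s^2) over Q.
   Starting from theta_0 = zeta, the alpha_i are adjoined one at a time: since alpha_i is a simple
   root of x^(d_i) - a_i, the classical primitive element argument gives
   Q(theta + t alpha_i) = Q(theta, alpha_i) for all but at most deg(theta) * d_i natural numbers t. *)

lemma subfield_zero: "is_subfield F \<Longrightarrow> 0 \<in> F"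
  and subfield_one: "is_subfield F \<Longrightarrow> 1 \<in> F"
  and subfield_add: "is_subfield F \<Longrightarrow> x \<in> F \<Longrightarrow> y \<in> F \<Longrightarrow> x + y \<in> F"
  and subfield_mult: "is_subfield F \<Longrightarrow> x \<in> F \<Longrightarrow> y \<in> F \<Longrightarrow> x * y \<in> F"
  and subfield_uminus: "is_subfield F \<Longrightarrow> x \<in> F \<Longrightarrow> - x \<in> F"
  and subfield_inverse: "is_subfield F \<Longrightarrow> x \<in> F \<Longrightarrow> inverse x \<in> F"
  by (simp_all add: is_subfield_def)

lemma subfield_diff: "is_subfield F \<Longrightarrow> x \<in> F \<Longrightarrow> y \<in> F \<Longrightarrow> x - y \<in> F"
  using subfield_add[of F x "- y"] subfield_uminus[of F y] by simp

lemma subfield_divide: "is_subfield F \<Longrightarrow> x \<in> F \<Longrightarrow> y \<in> F \<Longrightarrow> x / y \<in> F"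
  using subfield_mult[of F x "inverse y"] subfield_inverse[of F y] by (simp add: divide_inverse)

lemma subfield_of_nat: "is_subfield F \<Longrightarrow> of_nat n \<in> F"
  by (induction n) (auto simp: subfield_zero subfield_one subfield_add)

lemma subfield_of_int: "is_subfield F \<Longrightarrow> of_int n \<in> F"
  by (cases n rule: int_cases) (auto simp: subfield_of_nat subfield_uminus simp del: of_nat_Suc)

lemma subfield_of_rat: "is_subfield F \<Longrightarrow> of_rat r \<in> F"
  by (cases r) (simp add: Fract_of_int_quotient of_rat_divide subfield_divide subfield_of_int)

lemma subfield_Rats: "is_subfield F \<Longrightarrow> x \<in> \<rat> \<Longrightarrow> x \<in> F"
  by (auto simp: subfield_of_rat elim!: Rats_cases)

lemma subfield_sum: "is_subfield F \<Longrightarrow> (\<And>x. x \<in> A \<Longrightarrow> f x \<in> F) \<Longrightarrow> sum f A \<in> F"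
  by (induction A rule: infinite_finite_induct) (auto simp: subfield_zero subfield_add)

lemma subfield_field_gen: "is_subfield (field_gen S)"
  unfolding field_gen_def is_subfield_def by auto

lemma field_gen_superset: "S \<subseteq> field_gen S"
  unfolding field_gen_def by auto

lemma field_gen_least: "is_subfield F \<Longrightarrow> S \<subseteq> F \<Longrightarrow> field_gen S \<subseteq> F"
  unfolding field_gen_def by auto

lemma field_gen_Un_field_gen: "field_gen (field_gen A \<union> B) = field_gen (A \<union> B)"
proof
  show "field_gen (field_gen A \<union> B) \<subseteq> field_gen (A \<union> B)"
    using field_gen_least[OF subfield_field_gen, of A "A \<union> B"] field_gen_superset[of "A \<union> B"]
    by (intro field_gen_least[OF subfield_field_gen]) auto
  show "field_gen (A \<union> B) \<subseteq> field_gen (field_gen A \<union> B)"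
    using field_gen_superset[of A] field_gen_superset[of "field_gen A \<union> B"]
    by (intro field_gen_least[OF subfield_field_gen]) auto
qed

definition poly_over :: "complex set \<Rightarrow> complex poly \<Rightarrow> bool" where
  "poly_over F p \<longleftrightarrow> (\<forall>i. coeff p i \<in> F)"

lemma poly_over_0: "is_subfield F \<Longrightarrow> poly_over F 0"
  and poly_over_1: "is_subfield F \<Longrightarrow> poly_over F 1"
  and poly_over_add: "is_subfield F \<Longrightarrow> poly_over F p \<Longrightarrow> poly_over F q \<Longrightarrow> poly_over F (p + q)"
  and poly_over_diff: "is_subfield F \<Longrightarrow> poly_over F p \<Longrightarrow> poly_over F q \<Longrightarrow> poly_over F (p - q)"
  and poly_over_mult: "is_subfield F \<Longrightarrow> poly_over F p \<Longrightarrow> poly_over F q \<Longrightarrow> poly_over F (p * q)"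
  and poly_over_monom: "is_subfield F \<Longrightarrow> c \<in> F \<Longrightarrow> poly_over F (monom c n)"
  and poly_over_const: "is_subfield F \<Longrightarrow> c \<in> F \<Longrightarrow> poly_over F [:c:]"
  and poly_over_of_rat: "is_subfield F \<Longrightarrow> poly_over F (map_poly of_rat r)"
  by (auto simp: poly_over_def coeff_1 coeff_mult coeff_map_poly coeff_pCons
      subfield_zero subfield_one subfield_add subfield_diff subfield_mult subfield_sum
      subfield_of_rat split: nat.split)

lemma poly_over_pcompose:
  assumes F: "is_subfield F" and q: "poly_over F q"
  shows "poly_over F p \<Longrightarrow> poly_over F (pcompose p q)"
proof (induction p rule: pCons_induct)
  case (pCons a p)
  then have "a \<in> F" "poly_over F p"
    unfolding poly_over_def by (metis coeff_pCons_0, metis coeff_pCons_Suc)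
  with pCons.IH show ?case
    using F q by (simp add: pcompose_pCons poly_over_add poly_over_const poly_over_mult)
qed (simp add: F poly_over_0)

lemma poly_over_div_mod:
  assumes F: "is_subfield F" and d: "poly_over F d" "d \<noteq> 0"
  shows "poly_over F p \<Longrightarrow>
    \<exists>q r. poly_over F q \<and> poly_over F r \<and> p = q * d + r \<and> (r = 0 \<or> degree r < degree d)"
proof (induction "degree p" arbitrary: p rule: less_induct)
  case less
  show ?case
  proof (cases "p = 0 \<or> degree p < degree d")
    case True
    then show ?thesis using less.prems F by (intro exI[of _ 0] exI[of _ p]) (auto simp: poly_over_0)
  next
    case False
    define c where "c = lead_coeff p / lead_coeff d"
    define m where "m = degree p - degree d"
    define p' where "p' = p - monom c m * d"
    have cF: "c \<in> F" unfolding c_def using less.prems d F by (simp add: poly_over_def subfield_divide)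
    have p'F: "poly_over F p'" unfolding p'_def
      using F less.prems d cF by (simp add: poly_over_diff poly_over_mult poly_over_monom)
    have "degree (monom c m * d) = degree p"
      using False d by (simp add: c_def m_def degree_mult_eq degree_monom_eq)
    then have "degree p' \<le> degree p" unfolding p'_def by (metis degree_diff_le le_refl)
    moreover have "coeff p' (degree p) = 0"
      using False d by (simp add: p'_def c_def m_def coeff_monom_mult)
    ultimately have p'_lower: "p' = 0 \<or> degree p' < degree p"
      by (metis le_neq_implies_less leading_coeff_0_iff)
    obtain q r where qr: "poly_over F q" "poly_over F r" "p' = q * d + r" "r = 0 \<or> degree r < degree d"
    proof (cases "p' = 0")
      case True
      then show ?thesis using F by (intro that[of 0 0]) (auto simp: poly_over_0)
    next
      case False
      then show ?thesis using p'_lower less.hyps p'F that by blast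
    qed
    have "p = (q + monom c m) * d + r" using qr(3) by (simp add: p'_def algebra_simps)
    then show ?thesis using qr F cF by (metis poly_over_add poly_over_monom)
  qed
qed

text \<open>The divisor is an element of least degree of the ideal \<open>(G, H)\<close> of \<open>F[x]\<close>.\<close>
lemma poly_over_common_divisor:
  assumes F: "is_subfield F" and G: "poly_over F G" "G \<noteq> 0" and H: "poly_over F H"
  obtains p u v where "poly_over F p" "p \<noteq> 0" "p dvd G" "p dvd H" "p = u * G + v * H"
proof -
  define I where "I = {u * G + v * H | u v. poly_over F u \<and> poly_over F v}"
  have GI: "G \<in> I" unfolding I_def using F by (intro CollectI exI[of _ 1] exI[of _ 0]) (auto simp: poly_over_0 poly_over_1)
  have HI: "H \<in> I" unfolding I_def using F by (intro CollectI exI[of _ 0] exI[of _ 1]) (auto simp: poly_over_0 poly_over_1)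
  obtain p where p: "p \<in> I" "p \<noteq> 0"
    and p_least: "\<And>q. q \<in> I \<Longrightarrow> q \<noteq> 0 \<Longrightarrow> degree p \<le> degree q"
    using ex_has_least_nat[of "\<lambda>q. q \<in> I \<and> q \<noteq> 0" G degree] GI G(2) by blast
  obtain u v where uv: "poly_over F u" "poly_over F v" "p = u * G + v * H" using p(1) unfolding I_def by blast
  have pF: "poly_over F p" using uv F G H by (simp add: poly_over_add poly_over_mult)
  have "p dvd X" if "X \<in> I" for X
  proof -
    obtain u' v' where X: "poly_over F u'" "poly_over F v'" "X = u' * G + v' * H" using \<open>X \<in> I\<close> unfolding I_def by blast
    then have "poly_over F X" using F G H by (simp add: poly_over_add poly_over_mult)
    then obtain q r where qr: "poly_over F q" "poly_over F r" "X = q * p + r" "r = 0 \<or> degree r < degree p"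
      using poly_over_div_mod[OF F pF p(2)] by blast
    have "r = (u' - q * u) * G + (v' - q * v) * H" using qr(3) X(3) uv(3) by (simp add: algebra_simps)
    then have "r \<in> I" unfolding I_def using F X uv qr by (blast intro: poly_over_diff poly_over_mult)
    then have "r = 0" using qr(4) p_least by force
    then show ?thesis using qr(3) by simp
  qed
  then show thesis using that pF p(2) GI HI uv(3) by blast
qed

lemma unique_simple_root_in_subfield:
  assumes F: "is_subfield F" and p: "poly_over F p" "p \<noteq> 0" "poly p \<beta> = 0" "order \<beta> p \<le> 1"
    and unique: "\<And>z. poly p z = 0 \<Longrightarrow> z = \<beta>"
  shows "\<beta> \<in> F"
proof -
  have order: "order \<beta> p = 1" using p order_root by (metis le_antisym less_one not_le)
  obtain q where q: "p = [:- \<beta>, 1:] ^ order \<beta> p * q" "\<not> [:- \<beta>, 1:] dvd q"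
    using order_decomp[of p \<beta>] p(2) by blast
  have "\<not> (\<exists>z. poly q z = 0)"
  proof
    assume "\<exists>z. poly q z = 0"
    then obtain z where z: "poly q z = 0" by blast
    then have "z = \<beta>" using unique q(1) by (metis mult_eq_0_iff poly_mult)
    then show False using z q(2) poly_eq_0_iff_dvd by blast
  qed
  then have "degree q = 0" using fundamental_theorem_of_algebra constant_degree by blast
  moreover have "q \<noteq> 0" using p(2) q(1) by auto
  then have "degree p = degree ([:- \<beta>, 1:] ^ order \<beta> p) + degree q"
    by (subst q(1), intro degree_mult_eq) auto
  ultimately have deg: "degree p = 1" using order by (simp only: degree_linear_power)
  then have "coeff p 1 \<noteq> 0" by (metis leading_coeff_0_iff one_neq_zero degree_0)
  moreover have "coeff p 0 + coeff p 1 * \<beta> = 0" using p(3) deg by (simp add: poly_altdef)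
  ultimately have "\<beta> = - coeff p 0 / coeff p 1" by (simp add: field_simps add_eq_0_iff)
  then show ?thesis using F p(1) by (simp add: poly_over_def subfield_divide subfield_uminus)
qed

section \<open>Primitive elements of two-generator fields\<close>

lemma field_gen_sum_eq_pair:
  fixes \<gamma> \<beta> t :: complex
  assumes t: "t \<in> \<rat>" and \<beta>: "\<beta> \<in> field_gen {\<gamma> + t * \<beta>}"
  shows "field_gen {\<gamma> + t * \<beta>} = field_gen {\<gamma>, \<beta>}"
proof
  have "\<gamma> + t * \<beta> \<in> field_gen {\<gamma>, \<beta>}"
    using field_gen_superset[of "{\<gamma>, \<beta>}"] subfield_field_gen subfield_Rats[OF _ t]
    by (simp add: subfield_add subfield_mult)
  then show "field_gen {\<gamma> + t * \<beta>} \<subseteq> field_gen {\<gamma>, \<beta>}"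
    by (simp add: field_gen_least subfield_field_gen)
  have "\<gamma> = (\<gamma> + t * \<beta>) - t * \<beta>" by simp
  also have "\<dots> \<in> field_gen {\<gamma> + t * \<beta>}"
    using field_gen_superset[of "{\<gamma> + t * \<beta>}"] subfield_field_gen subfield_Rats[OF _ t] \<beta>
    by (intro subfield_diff subfield_mult) auto
  finally show "field_gen {\<gamma>, \<beta>} \<subseteq> field_gen {\<gamma> + t * \<beta>}"
    using \<beta> by (simp add: field_gen_least subfield_field_gen)
qed

text \<open>Over \<open>F = \<rat>(\<gamma> + t\<beta>)\<close> the polynomials \<open>g(x)\<close> and \<open>f(\<gamma> + t\<beta> - tx)\<close> have \<open>\<beta>\<close>
  as their only common root, and it is simple in \<open>g\<close>; so their common divisor in \<open>F[x]\<close> is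
  linear, and \<open>\<beta> \<in> F\<close>.\<close>
lemma in_field_gen_primitive_sum:
  fixes \<gamma> \<beta> t :: complex and f g :: "rat poly"
  assumes f: "poly (map_poly of_rat f) \<gamma> = 0"
    and g: "poly (map_poly of_rat g) \<beta> = 0" "poly (pderiv (map_poly of_rat g)) \<beta> \<noteq> 0"
    and t: "t \<in> \<rat>"
    and separating: "\<And>\<gamma>' \<beta>'. poly (map_poly of_rat f) \<gamma>' = 0 \<Longrightarrow>
      poly (map_poly of_rat g) \<beta>' = 0 \<Longrightarrow> \<beta>' \<noteq> \<beta> \<Longrightarrow> \<gamma>' + t * \<beta>' \<noteq> \<gamma> + t * \<beta>"
  shows "\<beta> \<in> field_gen {\<gamma> + t * \<beta>}"
proof -
  define \<theta> where "\<theta> = \<gamma> + t * \<beta>"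
  define F where "F = field_gen {\<theta>}"
  define G where "G = map_poly (of_rat :: rat \<Rightarrow> complex) g"
  define H where "H = pcompose (map_poly of_rat f) [:\<theta>, - t:]"
  have F: "is_subfield F" unfolding F_def by (rule subfield_field_gen)
  have "\<theta> \<in> F" unfolding F_def using field_gen_superset by blast
  then have HF: "poly_over F H"
    unfolding H_def using F t
    by (intro poly_over_pcompose poly_over_of_rat)
      (auto simp: poly_over_def coeff_pCons subfield_zero subfield_uminus subfield_of_rat elim!: Rats_cases split: nat.split)
  have poly_H: "poly H x = poly (map_poly of_rat f) (\<theta> - t * x)" for x
    by (simp add: H_def poly_pcompose mult.commute)
  have G0: "G \<noteq> 0" using g(2) by (auto simp: G_def)
  have GF: "poly_over F G" unfolding G_def using F by (rule poly_over_of_rat)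
  obtain p u v where p: "poly_over F p" "p \<noteq> 0" "p dvd G" "p dvd H" "p = u * G + v * H"
    using poly_over_common_divisor[OF F GF G0 HF] by blast
  have "poly p \<beta> = 0" using p(5) f g(1) by (simp add: poly_H G_def \<theta>_def)
  moreover have "order \<beta> p \<le> 1"
  proof -
    have "order \<beta> G = 1"
      using order_pderiv[OF G0, of \<beta>] g order_root[of "pderiv G" \<beta>] by (simp add: G_def)
    then show ?thesis using dvd_imp_order_le[OF G0 p(3), of \<beta>] by simp
  qed
  moreover have "z = \<beta>" if "poly p z = 0" for z
  proof (rule ccontr)
    assume "z \<noteq> \<beta>"
    moreover have "poly G z = 0" "poly H z = 0"
      using p(3,4) that by (metis dvdE mult_eq_0_iff poly_mult)+
    ultimately show False using separating[of "\<theta> - t * z" z] by (simp add: poly_H G_def \<theta>_def)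
  qed
  ultimately have "\<beta> \<in> F" by (rule unique_simple_root_in_subfield[OF F p(1,2)])
  then show ?thesis unfolding F_def \<theta>_def .
qed

lemma exists_nat_not_in:
  fixes A :: "complex set"
  assumes "finite A" "card A \<le> M"
  obtains t :: nat where "t \<le> M" "of_nat t \<notin> A"
proof -
  have "card (of_nat ` {..M} :: complex set) = Suc M"
    by (subst card_image) (auto simp: inj_on_def)
  then have "\<not> of_nat ` {..M} \<subseteq> A" using assms card_mono by (metis Suc_n_not_le_n le_trans)
  then show thesis using that by blast
qed

text \<open>At most \<open>deg f \<cdot> deg g\<close> values of \<open>t\<close> violate the separation condition.\<close>
lemma primitive_element_pair:
  fixes \<gamma> \<beta> :: complex and f g :: "rat poly"
  assumes f: "f \<noteq> 0" "poly (map_poly of_rat f) \<gamma> = 0"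
    and g: "poly (map_poly of_rat g) \<beta> = 0" "poly (pderiv (map_poly of_rat g)) \<beta> \<noteq> 0"
  obtains t :: nat where "t \<le> degree f * degree g" "field_gen {\<gamma> + of_nat t * \<beta>} = field_gen {\<gamma>, \<beta>}"
proof -
  define f' where "f' = map_poly (of_rat :: rat \<Rightarrow> complex) f"
  define g' where "g' = map_poly (of_rat :: rat \<Rightarrow> complex) g"
  have f'0: "f' \<noteq> 0" using f(1) by (auto simp: f'_def poly_eq_iff coeff_map_poly)
  have g'0: "g' \<noteq> 0" using g(2) by (auto simp: g'_def)
  define Rf where "Rf = {z. poly f' z = 0}"
  define Rg where "Rg = {z. poly g' z = 0}"
  define Bad where "Bad = (\<lambda>(\<gamma>', \<beta>'). (\<gamma>' - \<gamma>) / (\<beta> - \<beta>')) ` (Rf \<times> Rg)"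
  have fin: "finite Rf" "finite Rg" using f'0 g'0 by (auto simp: Rf_def Rg_def poly_roots_finite)
  have "card Rf \<le> degree f" "card Rg \<le> degree g"
    using card_poly_roots_bound[OF f'0] card_poly_roots_bound[OF g'0]
    by (simp_all add: Rf_def Rg_def f'_def g'_def degree_map_poly)
  then have "card Bad \<le> degree f * degree g"
    unfolding Bad_def using card_image_le[OF finite_cartesian_product[OF fin]] mult_le_mono
    by (metis card_cartesian_product le_trans)
  moreover have "finite Bad" unfolding Bad_def using fin by simp
  ultimately obtain t where t: "t \<le> degree f * degree g" "of_nat t \<notin> Bad"
    using exists_nat_not_in by blast
  have "\<beta> \<in> field_gen {\<gamma> + of_nat t * \<beta>}"
  proof (rule in_field_gen_primitive_sum[OF f(2) g Rats_of_nat])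
    fix \<gamma>' \<beta>' :: complex
    assume "poly (map_poly of_rat f) \<gamma>' = 0" "poly (map_poly of_rat g) \<beta>' = 0" "\<beta>' \<noteq> \<beta>"
    then have "(\<gamma>', \<beta>') \<in> Rf \<times> Rg" "\<beta> - \<beta>' \<noteq> 0" by (simp_all add: Rf_def Rg_def f'_def g'_def)
    then show "\<gamma>' + of_nat t * \<beta>' \<noteq> \<gamma> + of_nat t * \<beta>"
      using t(2) unfolding Bad_def by (force simp: field_simps)
  qed
  then show thesis using that t(1) field_gen_sum_eq_pair[OF Rats_of_nat] by blast
qed

section \<open>Degree bounds from rational spans\<close>

interpretation QV: vector_space "\<lambda>(r::rat) (x::complex). of_rat r * x"
  by unfold_locales (auto simp: algebra_simps of_rat_add of_rat_mult)

lemma QV_span_mult_Rats: "c \<in> \<rat> \<Longrightarrow> x \<in> QV.span B \<Longrightarrow> c * x \<in> QV.span B"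
  by (auto elim!: Rats_cases intro: QV.span_scale)

lemma rat_poly_root_if_powers_dependent:
  fixes x :: complex
  assumes inj: "inj_on (\<lambda>n. x ^ n) {..N}" and dep: "QV.dependent ((\<lambda>n. x ^ n) ` {..N})"
  obtains q :: "rat poly" where "q \<noteq> 0" "poly (map_poly of_rat q) x = 0" "degree q \<le> N"
proof -
  obtain T u where T: "T \<subseteq> (\<lambda>n. x ^ n) ` {..N}" "(\<Sum>v\<in>T. of_rat (u v) * v) = 0" "\<exists>v\<in>T. u v \<noteq> 0"
    using dep unfolding QV.dependent_explicit by blast
  define A where "A = {n \<in> {..N}. x ^ n \<in> T}"
  define w where "w n = (if n \<in> A then u (x ^ n) else 0)" for n
  define q where "q = (\<Sum>n\<le>N. monom (w n) n)"
  have coeff_q: "coeff q n = (if n \<le> N then w n else 0)" for n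
    by (simp add: q_def coeff_sum coeff_monom)
  have TA: "T = (\<lambda>n. x ^ n) ` A" using T(1) unfolding A_def by auto
  have inj_A: "inj_on (\<lambda>n. x ^ n) A" using inj by (rule inj_on_subset) (auto simp: A_def)
  have "map_poly (of_rat :: rat \<Rightarrow> complex) q = (\<Sum>n\<le>N. monom (of_rat (w n)) n)"
    by (rule poly_eqI) (simp add: q_def coeff_map_poly coeff_sum coeff_monom)
  then have "poly (map_poly of_rat q) x = (\<Sum>n\<le>N. of_rat (w n) * x ^ n)"
    by (simp add: poly_sum poly_monom)
  also have "\<dots> = (\<Sum>n\<in>A. of_rat (u (x ^ n)) * x ^ n)"
    by (rule sum.mono_neutral_cong_right) (auto simp: A_def w_def)
  also have "\<dots> = 0" using T(2) unfolding TA by (simp add: sum.reindex[OF inj_A])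
  finally have "poly (map_poly of_rat q) x = 0" .
  moreover have "q \<noteq> 0"
  proof -
    obtain n where "n \<in> A" "u (x ^ n) \<noteq> 0" using T(3) unfolding TA by blast
    then have "coeff q n \<noteq> 0" by (auto simp: coeff_q w_def A_def)
    then show ?thesis by auto
  qed
  moreover have "degree q \<le> N" by (rule degree_le) (simp add: coeff_q)
  ultimately show thesis using that by blast
qed

lemma algebraic_if_powers_in_span:
  fixes x :: complex
  assumes B: "finite B" and powers: "\<And>n. x ^ n \<in> QV.span B"
  obtains q :: "rat poly" where "q \<noteq> 0" "poly (map_poly of_rat q) x = 0" "degree q \<le> card B"
proof (cases "inj_on (\<lambda>n. x ^ n) {..card B}")
  case False
  then obtain i j where ij: "i \<le> card B" "j \<le> card B" "i \<noteq> j" "x ^ i = x ^ j"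
    unfolding inj_on_def by auto
  define q :: "rat poly" where "q = monom 1 j - monom 1 i"
  have "map_poly of_rat q = (monom 1 j - monom 1 i :: complex poly)"
    by (rule poly_eqI) (simp add: q_def coeff_map_poly of_rat_diff coeff_monom)
  then have "poly (map_poly of_rat q) x = 0" using ij(4) by (simp add: poly_monom)
  moreover have "q \<noteq> 0"
  proof
    assume "q = 0"
    then have "coeff q j = 0" by simp
    then show False using ij(3) by (simp add: q_def)
  qed
  moreover have "degree q \<le> card B"
    using ij unfolding q_def by (intro order.trans[OF degree_diff_le_max]) (simp add: degree_monom_eq)
  ultimately show thesis using that by blast
next
  case True
  then have "card ((\<lambda>n. x ^ n) ` {..card B}) > card B" by (simp add: card_image)
  then have "QV.dependent ((\<lambda>n. x ^ n) ` {..card B})"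
    using QV.independent_span_bound[OF B] powers by force
  with True show thesis using rat_poly_root_if_powers_dependent that by blast
qed

lemma is_min_poly_exists:
  assumes "q \<noteq> 0" "poly (map_poly of_rat q) x = 0"
  obtains p where "is_min_poly p x" "degree p \<le> degree q"
proof -
  obtain q0 where q0: "q0 \<noteq> 0" "poly (map_poly of_rat q0) x = 0"
    and least: "\<And>r. r \<noteq> 0 \<Longrightarrow> poly (map_poly of_rat r) x = 0 \<Longrightarrow> degree q0 \<le> degree r"
    using ex_has_least_nat[of "\<lambda>r. r \<noteq> 0 \<and> poly (map_poly (of_rat :: rat \<Rightarrow> complex) r) x = 0" q degree]
      assms by blast
  define p where "p = smult (inverse (lead_coeff q0)) q0"
  have "map_poly (of_rat :: rat \<Rightarrow> complex) p = smult (of_rat (inverse (lead_coeff q0))) (map_poly of_rat q0)"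
    by (rule poly_eqI) (simp add: p_def coeff_map_poly of_rat_mult)
  then have "is_min_poly p x" using q0 least by (simp add: is_min_poly_def p_def)
  moreover have "degree p \<le> degree q" using q0 least assms by (simp add: p_def)
  ultimately show thesis using that by blast
qed

lemma QV_span_mult:
  fixes M :: "complex set"
  assumes mult: "\<And>x y. x \<in> M \<Longrightarrow> y \<in> M \<Longrightarrow> x * y \<in> M"
    and x: "x \<in> QV.span M" and y: "y \<in> QV.span M"
  shows "x * y \<in> QV.span M"
proof -
  have left: "m * y \<in> QV.span M" if "m \<in> M" for m
    using y
  proof (induction rule: QV.span_induct_alt)
    case (step c z w)
    have "m * (of_rat c * z + w) = of_rat c * (m * z) + m * w" by (simp add: algebra_simps)
    then show ?case using step(2) mult[OF that step(1)] by (simp add: QV.span_add QV.span_scale QV.span_base)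
  qed (simp add: QV.span_zero)
  show ?thesis using x
  proof (induction rule: QV.span_induct_alt)
    case (step c z w)
    have "(of_rat c * z + w) * y = of_rat c * (z * y) + w * y" by (simp add: algebra_simps)
    then show ?case using step left by (simp add: QV.span_add QV.span_scale)
  qed (simp add: QV.span_zero)
qed

lemma QV_span_power:
  fixes M :: "complex set"
  assumes "\<And>x y. x \<in> M \<Longrightarrow> y \<in> M \<Longrightarrow> x * y \<in> M" "1 \<in> M" "x \<in> QV.span M"
  shows "x ^ n \<in> QV.span M"
  by (induction n) (auto simp: QV.span_base assms QV_span_mult)

definition power_products :: "(nat \<Rightarrow> complex) \<Rightarrow> nat set \<Rightarrow> complex set" where
  "power_products g I = {\<Prod>i\<in>I. g i ^ e i | e. True}"

lemma power_productsI: "(\<Prod>i\<in>I. g i ^ e i) \<in> power_products g I"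
  unfolding power_products_def by blast

lemma power_products_mult:
  assumes "x \<in> power_products g I" "y \<in> power_products g I"
  shows "x * y \<in> power_products g I"
proof -
  obtain e e' where "x = (\<Prod>i\<in>I. g i ^ e i)" "y = (\<Prod>i\<in>I. g i ^ e' i)"
    using assms unfolding power_products_def by blast
  then have "x * y = (\<Prod>i\<in>I. g i ^ (e i + e' i))" by (simp add: power_add prod.distrib)
  then show ?thesis by (simp add: power_productsI)
qed

lemma one_in_power_products: "1 \<in> power_products g I"
  using power_productsI[where e = "\<lambda>_. 0"] by simp

lemma generator_in_power_products:
  assumes "finite I" "j \<in> I"
  shows "g j \<in> power_products g I"
proof -
  have "(\<Prod>i\<in>I. g i ^ (if i = j then 1 else 0)) = (\<Prod>i\<in>I. if i = j then g i else 1)"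
    by (rule prod.cong) auto
  also have "\<dots> = g j" using assms by simp
  finally show ?thesis by (metis power_productsI)
qed

text \<open>Exponents are reduced modulo \<open>n i\<close> at the cost of the rational factor
  \<open>(g i ^ n i) ^ (e i div n i)\<close>.\<close>
lemma power_products_subset_span:
  assumes I: "finite I" and g: "\<And>i. i \<in> I \<Longrightarrow> n i > 0 \<and> g i ^ n i \<in> \<rat>"
  shows "power_products g I \<subseteq> QV.span ((\<lambda>e. \<Prod>i\<in>I. g i ^ e i) ` PiE I (\<lambda>i. {..<n i}))"
    (is "_ \<subseteq> QV.span ?B")
proof
  fix x assume "x \<in> power_products g I"
  then obtain e where x: "x = (\<Prod>i\<in>I. g i ^ e i)" unfolding power_products_def by blast
  define e' where "e' = restrict (\<lambda>i. e i mod n i) I"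
  have "g i ^ e i = (g i ^ n i) ^ (e i div n i) * g i ^ e' i" if "i \<in> I" for i
  proof -
    have "e i = n i * (e i div n i) + e' i" using that by (simp add: e'_def)
    then show ?thesis by (metis power_add power_mult)
  qed
  then have "x = (\<Prod>i\<in>I. (g i ^ n i) ^ (e i div n i)) * (\<Prod>i\<in>I. g i ^ e' i)"
    unfolding x prod.distrib[symmetric] by (rule prod.cong[OF refl])
  moreover have "(\<Prod>i\<in>I. (g i ^ n i) ^ (e i div n i)) \<in> \<rat>"
    using g by (blast intro: Rats_prod Rats_power)
  moreover have "e' \<in> PiE I (\<lambda>i. {..<n i})" using g by (auto simp: e'_def)
  then have "(\<Prod>i\<in>I. g i ^ e' i) \<in> ?B" by blast
  ultimately show "x \<in> QV.span ?B" by (simp add: QV_span_mult_Rats QV.span_base)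
qed

lemma algebraic_degree_le_prod:
  assumes I: "finite I" and g: "\<And>i. i \<in> I \<Longrightarrow> n i > 0 \<and> g i ^ n i \<in> \<rat>"
    and x: "x \<in> QV.span (power_products g I)"
  obtains p where "is_min_poly p x" "degree p \<le> (\<Prod>i\<in>I. n i)"
proof -
  define B where "B = (\<lambda>e. \<Prod>i\<in>I. g i ^ e i) ` PiE I (\<lambda>i. {..<n i})"
  have "QV.span (power_products g I) \<subseteq> QV.span B"
    unfolding B_def by (rule QV.span_minimal[OF power_products_subset_span[OF I g] QV.subspace_span])
  then have "x ^ k \<in> QV.span B" for k
    using QV_span_power[OF power_products_mult one_in_power_products x] by blast
  moreover have "finite B" unfolding B_def using I by (simp add: finite_PiE)
  moreover have "card B \<le> (\<Prod>i\<in>I. n i)"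
  proof -
    have "card B \<le> card (PiE I (\<lambda>i. {..<n i}))" unfolding B_def by (rule card_image_le) (simp add: I finite_PiE)
    then show ?thesis by (simp add: I card_PiE)
  qed
  ultimately obtain q where "q \<noteq> 0" "poly (map_poly of_rat q) x = 0" "degree q \<le> (\<Prod>i\<in>I. n i)"
    using algebraic_if_powers_in_span[of B x] by (metis le_trans)
  then show thesis using is_min_poly_exists that le_trans by metis
qed

section \<open>Primitive elements with small coefficients\<close>

lemma simple_root_of_pure_power:
  fixes x :: complex
  assumes x: "x \<noteq> 0" and n: "n > 0" and rat: "x ^ n \<in> \<rat>"
  obtains g :: "rat poly"
  where "degree g = n" "poly (map_poly of_rat g) x = 0" "poly (pderiv (map_poly of_rat g)) x \<noteq> 0"
proof -
  obtain r where r: "x ^ n = of_rat r" using rat by (auto elim: Rats_cases)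
  define g :: "rat poly" where "g = monom 1 n + [:- r:]"
  have g: "map_poly of_rat g = (monom 1 n + [:- of_rat r:] :: complex poly)"
    by (rule poly_eqI) (simp add: g_def coeff_map_poly of_rat_add of_rat_minus coeff_monom coeff_pCons split: nat.split)
  have "degree g = n" using n by (simp add: g_def degree_add_eq_left degree_monom_eq)
  moreover have "poly (map_poly of_rat g) x = 0" using r by (simp add: g poly_monom)
  moreover have "pderiv (map_poly of_rat g) = (monom (of_nat n) (n - 1) :: complex poly)"
    by (simp add: g pderiv_add pderiv_monom pderiv_pCons)
  then have "poly (pderiv (map_poly of_rat g)) x \<noteq> 0" using x n by (simp add: poly_monom)
  ultimately show thesis using that by blast
qed

lemma primitive_element_adjoin_pure_power:
  fixes \<theta> \<beta> :: complex
  assumes f: "is_min_poly f \<theta>" and \<beta>: "\<beta> \<noteq> 0" "m > 0" "\<beta> ^ m \<in> \<rat>"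
  obtains t :: nat where "t \<le> degree f * m" "field_gen {\<theta> + of_nat t * \<beta>} = field_gen {\<theta>, \<beta>}"
proof -
  obtain h where "degree h = m" "poly (map_poly of_rat h) \<beta> = 0" "poly (pderiv (map_poly of_rat h)) \<beta> \<noteq> 0"
    using simple_root_of_pure_power[OF \<beta>] by blast
  then show thesis using primitive_element_pair[of f \<theta> h \<beta>] f that unfolding is_min_poly_def by metis
qed

lemma bounded_primitive_element:
  fixes g :: "nat \<Rightarrow> complex" and n :: "nat \<Rightarrow> nat" and k :: nat
  assumes g: "\<And>i. i \<le> k \<Longrightarrow> n i > 0 \<and> g i \<noteq> 0 \<and> g i ^ n i \<in> \<rat>"
  defines "N \<equiv> \<Prod>i\<le>k. n i"
  obtains c :: "nat \<Rightarrow> int"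
  where "\<And>i. i \<le> k \<Longrightarrow> \<bar>c i\<bar> \<le> int (N * n i)"
    and "field_gen {\<Sum>i\<le>k. of_int (c i) * g i} = field_gen (g ` {..k})"
    and "\<exists>p. is_min_poly p (\<Sum>i\<le>k. of_int (c i) * g i) \<and> degree p \<le> N"
proof -
  define \<theta> where "\<theta> c j = (\<Sum>i\<le>j. of_int (c i) * g i)" for c :: "nat \<Rightarrow> int" and j
  have min_poly: "\<exists>p. is_min_poly p (\<theta> c j) \<and> degree p \<le> N" if "j \<le> k" for c j
  proof -
    have "\<theta> c j \<in> QV.span (power_products g {..k})"
      unfolding \<theta>_def using that
      by (intro QV.span_sum QV_span_mult_Rats QV.span_base generator_in_power_products) auto
    then show ?thesis unfolding N_def using algebraic_degree_le_prod g by (metis atMost_iff finite_atMost)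
  qed
  have "\<exists>c. (\<forall>i\<le>j. \<bar>c i\<bar> \<le> int (N * n i)) \<and> field_gen {\<theta> c j} = field_gen (g ` {..j})"
    if "j \<le> k" for j
    using that
  proof (induction j)
    case 0
    have "N > 0" unfolding N_def using g by (simp add: prod_pos)
    then have "int 1 \<le> int (N * n 0)" using g[of 0] by (simp only: of_nat_le_iff) (simp add: Suc_le_eq)
    then show ?case by (intro exI[of _ "\<lambda>_. 1"]) (simp add: \<theta>_def)
  next
    case (Suc j)
    then obtain c where c: "\<forall>i\<le>j. \<bar>c i\<bar> \<le> int (N * n i)" "field_gen {\<theta> c j} = field_gen (g ` {..j})"
      by auto
    obtain f where f: "is_min_poly f (\<theta> c j)" "degree f \<le> N"
      using min_poly[OF Suc_leD[OF Suc.prems]] by blast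
    obtain t :: nat where t: "t \<le> degree f * n (Suc j)"
      "field_gen {\<theta> c j + of_nat t * g (Suc j)} = field_gen {\<theta> c j, g (Suc j)}"
      using primitive_element_adjoin_pure_power[OF f(1)] g[OF Suc.prems] by blast
    define c' where "c' = c(Suc j := int t)"
    have "\<theta> c' (Suc j) = \<theta> c j + of_nat t * g (Suc j)"
      unfolding \<theta>_def c'_def by (simp add: sum.atMost_Suc)
    also have "field_gen {\<dots>} = field_gen (field_gen {\<theta> c j} \<union> {g (Suc j)})"
      using t(2) field_gen_Un_field_gen[of "{\<theta> c j}" "{g (Suc j)}"] by (simp add: insert_commute)
    also have "\<dots> = field_gen (g ` {..Suc j})"
      unfolding c(2) field_gen_Un_field_gen by (simp add: atMost_Suc insert_commute)
    finally have "field_gen {\<theta> c' (Suc j)} = field_gen (g ` {..Suc j})" .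
    moreover have "t \<le> N * n (Suc j)" using t(1) f(2) by (metis mult_le_mono1 le_trans)
    then have "int t \<le> int (N * n (Suc j))" by (simp only: of_nat_le_iff)
    then have "\<forall>i\<le>Suc j. \<bar>c' i\<bar> \<le> N * n i" using c(1) by (auto simp: c'_def le_Suc_eq)
    ultimately show ?case by blast
  qed
  then obtain c where "\<forall>i\<le>k. \<bar>c i\<bar> \<le> int (N * n i)" "field_gen {\<theta> c k} = field_gen (g ` {..k})"
    by blast
  then show thesis using that min_poly[of k c] unfolding \<theta>_def by blast
qed

lemma Lcm_image_pos:
  fixes d :: "'a \<Rightarrow> nat"
  assumes "finite A" "\<And>i. i \<in> A \<Longrightarrow> d i > 0"
  shows "Lcm (d ` A) > 0"
  using assms by (subst neq0_conv[symmetric], subst Lcm_0_iff) force+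

lemma Lcm_image_le_prod:
  fixes d :: "'a \<Rightarrow> nat"
  assumes "finite A" "\<And>i. i \<in> A \<Longrightarrow> d i > 0"
  shows "Lcm (d ` A) \<le> (\<Prod>i\<in>A. d i)"
  using assms by (intro dvd_imp_le Lcm_least) (auto simp: dvd_prodI prod_pos)

lemma Lcm_times_prod_le:
  fixes d :: "nat \<Rightarrow> nat"
  assumes "k \<le> s" "\<And>i. i \<in> {1..k} \<Longrightarrow> 0 < d i \<and> d i \<le> 2 ^ s"
  shows "Lcm (d ` {1..k}) * (\<Prod>i\<in>{1..k}. d i) \<le> 2 ^ (2 * s\<^sup>2)"
proof -
  have "(\<Prod>i\<in>{1..k}. d i) \<le> (2 ^ s) ^ s"
    using assms by (intro prod_le_power) auto
  then have P: "(\<Prod>i\<in>{1..k}. d i) \<le> 2 ^ s\<^sup>2" by (simp add: power2_eq_square power_mult)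
  then have "Lcm (d ` {1..k}) \<le> 2 ^ s\<^sup>2" using Lcm_image_le_prod[of "{1..k}" d] assms(2) by force
  then have "Lcm (d ` {1..k}) * (\<Prod>i\<in>{1..k}. d i) \<le> 2 ^ s\<^sup>2 * 2 ^ s\<^sup>2" using P by (rule mult_le_mono)
  then show ?thesis by (simp add: mult_2 power_add)
qed

lemma exp_root_of_unity_power: "D > 0 \<Longrightarrow> exp (2 * of_real pi * \<i> / of_nat D) ^ D = 1"
  by (simp flip: exp_of_nat_mult)

theorem mainTheorem6:
  fixes s k :: nat and a d :: "nat \<Rightarrow> nat"
  assumes "s \<ge> 1" and "k \<le> s"
    and "\<And>i. i \<in> {1..k} \<Longrightarrow> a i > 0 \<and> d i > 0 \<and> a i \<le> 2 ^ s \<and> d i \<le> 2 ^ s"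
    and "\<And>i j. i \<in> {1..k} \<Longrightarrow> j \<in> {1..k} \<Longrightarrow> i \<noteq> j \<Longrightarrow> coprime (a i) (a j)"
    and "\<And>i. i \<in> {1..k} \<Longrightarrow>
           is_min_poly (monom 1 (d i) - [:of_nat (a i):]) (complex_of_real (root (d i) (real (a i))))"
  shows "\<exists>c :: nat \<Rightarrow> int. (\<forall>i \<in> {0..k}. \<bar>c i\<bar> \<le> 2 ^ (4 * s\<^sup>2)) \<and>
           (let D = Lcm (d ` {1..k});
                \<zeta> = exp (2 * of_real pi * \<i> / of_nat D);
                K = field_gen ({complex_of_real (root (d i) (real (a i))) | i. i \<in> {1..k}} \<union> {\<zeta>});
                \<theta> = of_int (c 0) * \<zeta> + (\<Sum>i=1..k. of_int (c i) * complex_of_real (root (d i) (real (a i))))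
            in K = field_gen {\<theta>} \<and> (\<exists>p. is_min_poly p \<theta> \<and> degree p \<le> 2 ^ (2 * s\<^sup>2)))"
proof -
  define D where "D = Lcm (d ` {1..k})"
  define \<zeta> where "\<zeta> = exp (2 * of_real pi * \<i> / of_nat D)"
  define \<alpha> where "\<alpha> i = complex_of_real (root (d i) (real (a i)))" for i
  define gen where "gen i = (if i = 0 then \<zeta> else \<alpha> i)" for i
  define n where "n i = (if i = 0 then D else d i)" for i
  define N where "N = (\<Prod>i\<le>k. n i)"
  have ad: "a i > 0" "d i > 0" if "i \<in> {1..k}" for i using assms(3)[OF that] by auto
  have D: "D > 0" unfolding D_def using ad(2) by (intro Lcm_image_pos) auto
  have atMost_split: "{..k} = insert 0 {1..k}" by auto
  have "N = D * (\<Prod>i\<in>{1..k}. d i)" unfolding N_def atMost_split n_def by simp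
  then have N: "N \<le> 2 ^ (2 * s\<^sup>2)" unfolding D_def using Lcm_times_prod_le assms(2,3) by simp
  have "n i > 0 \<and> gen i \<noteq> 0 \<and> gen i ^ n i \<in> \<rat>" if "i \<le> k" for i
    using that D ad[of i] by (auto simp: n_def gen_def \<zeta>_def \<alpha>_def exp_root_of_unity_power simp flip: of_real_power)
  then obtain c where c: "\<And>i. i \<le> k \<Longrightarrow> \<bar>c i\<bar> \<le> int (N * n i)"
    and primitive: "field_gen {\<Sum>i\<le>k. of_int (c i) * gen i} = field_gen (gen ` {..k})"
    and degree: "\<exists>p. is_min_poly p (\<Sum>i\<le>k. of_int (c i) * gen i) \<and> degree p \<le> N"
    unfolding N_def using bounded_primitive_element[of k n gen] by blast
  have "n i \<le> N" if "i \<le> k" for i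
    using that D ad unfolding N_def by (intro dvd_imp_le dvd_prodI) (auto simp: n_def prod_pos)
  then have "N * n i \<le> 2 ^ (4 * s\<^sup>2)" if "i \<le> k" for i
    using that N mult_le_mono[of N "2 ^ (2 * s\<^sup>2)" "n i" "2 ^ (2 * s\<^sup>2)"] by (force simp flip: power_add)
  then have "int (N * n i) \<le> 2 ^ (4 * s\<^sup>2)" if "i \<le> k" for i
    using that by (metis of_nat_le_iff of_nat_numeral of_nat_power)
  then have c_small: "\<bar>c i\<bar> \<le> 2 ^ (4 * s\<^sup>2)" if "i \<le> k" for i
    using c that by (meson order.trans)
  have \<theta>: "(\<Sum>i\<le>k. of_int (c i) * gen i) = of_int (c 0) * \<zeta> + (\<Sum>i=1..k. of_int (c i) * \<alpha> i)"
    unfolding atMost_split by (simp add: gen_def)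
  have K: "gen ` {..k} = {\<alpha> i | i. i \<in> {1..k}} \<union> {\<zeta>}"
    unfolding atMost_split by (auto simp: gen_def)
  obtain p where "is_min_poly p (\<Sum>i\<le>k. of_int (c i) * gen i)" "degree p \<le> 2 ^ (2 * s\<^sup>2)"
    using degree N le_trans by blast
  then show ?thesis
    using c_small primitive unfolding Let_def D_def[symmetric] \<zeta>_def[symmetric] \<alpha>_def[symmetric] \<theta> K
    by (intro exI[of _ c]) auto
qed

end
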